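(* Assume that $H: [0,1]\to\mathbb{R}$ is upper semi-continuous. Let $\widehat H$ be the concave envelope of $H$. Then: (a) If $\liminf_{t\to1}{H(t)-H(1)\over t-1}>-\infty$, then $\widehat H^\prime(1-)>-\infty$. (b) If $\limsup_{t\to0}{H(t)-H(0)\over t}<\infty$, then $\widehat H^\prime(0)<\infty$.
   Context: The concave envelope $\widehat H$ of $H$ is defined by $\widehat H(s)=\inf\{G(s)\mid G\text{ is concave and }G\ge H\text{ on }[0,1]\}$, $s\in[0,1]$. Primes denote right derivatives; $\widehat H'(1-)$ is the left limit at $1$ of the right derivative. *)

theory Defs
  imports "HOL-Analysis.Analysis" "HOL-Library.Liminf_Limsup"
begin

definition usc_on :: "real set \<Rightarrow> (real \<Rightarrow> real) \<Rightarrow> bool" where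
  "usc_on S f \<longleftrightarrow> (\<forall>x\<in>S. \<forall>e>0. \<forall>\<^sub>F y in at x within S. f y < f x + e)"

definition concave_envelope :: "(real \<Rightarrow> real) \<Rightarrow> real \<Rightarrow> real" where
  "concave_envelope H s =
     Inf {G s | G. concave_on {0..1} G \<and> (\<forall>x\<in>{0..1}. H x \<le> G x)}"

definition right_deriv :: "(real \<Rightarrow> real) \<Rightarrow> real \<Rightarrow> ereal" where
  "right_deriv f x = Lim (at_right x) (\<lambda>t. ereal ((f t - f x) / (t - x)))"

end

theory Submission
  imports Defs
begin

(* Being upper semicontinuous, H is bounded above on [0,1]. Together with the one-sided bound on
   its difference quotients at an endpoint this yields an affine majorant of H that touches H at
   that endpoint. The concave envelope lies below this majorant and agrees with H at the endpoint,
   so its chord slopes from the endpoint are bounded by the slope of the majorant. For a concave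
   function the right derivative is the supremum of the chord slopes to the right and is
   antitone, which transfers the bound to the right derivatives. *)

lemma usc_on_compact_bdd_above:
  assumes "compact S" and usc: "usc_on S f"
  shows "bdd_above (f ` S)"
proof -
  have "\<exists>d>0. \<forall>y\<in>S. dist y x < d \<longrightarrow> f y < f x + 1" if "x \<in> S" for x
  proof -
    have "\<forall>\<^sub>F y in at x within S. f y < f x + 1"
      using usc that unfolding usc_on_def by auto
    then obtain d where "d > 0" "\<forall>y\<in>S. y \<noteq> x \<and> dist y x < d \<longrightarrow> f y < f x + 1"
      unfolding eventually_at by auto
    then show ?thesis by (metis less_add_one)
  qed
  then obtain d where d: "\<And>x. x \<in> S \<Longrightarrow> d x > 0 \<and> (\<forall>y\<in>S. dist y x < d x \<longrightarrow> f y < f x + 1)"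
    by metis
  have "S \<subseteq> (\<Union>x\<in>S. ball x (d x))"
    using d by force
  then obtain T where T: "T \<subseteq> S" "finite T" "S \<subseteq> (\<Union>x\<in>T. ball x (d x))"
    using compactE_image[OF \<open>compact S\<close>] by (metis open_ball)
  show ?thesis
  proof (rule bdd_aboveI2)
    fix y assume "y \<in> S"
    then obtain x where x: "x \<in> T" "y \<in> ball x (d x)"
      using T by auto
    then have "f y < f x + 1"
      using d[of x] T \<open>y \<in> S\<close> by (auto simp: dist_commute)
    also have "\<dots> \<le> Max ((\<lambda>x. f x + 1) ` T)"
      using x T by (intro Max_ge) auto
    finally show "f y \<le> Max ((\<lambda>x. f x + 1) ` T)" by simp
  qed
qed

lemma Lim_at_right_antimono:
  fixes f :: "real \<Rightarrow> 'b::{complete_linorder, linorder_topology}"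
  assumes "a < b" and antimono: "\<And>x y. a < x \<Longrightarrow> x \<le> y \<Longrightarrow> y < b \<Longrightarrow> f y \<le> f x"
  shows "Lim (at_right a) f = (SUP x\<in>{a<..<b}. f x)"
proof (rule tendsto_Lim[OF trivial_limit_at_right_real], rule order_tendstoI)
  fix y assume "y < (SUP x\<in>{a<..<b}. f x)"
  then obtain x0 where "x0 \<in> {a<..<b}" "y < f x0"
    by (auto simp: less_SUP_iff)
  then show "\<forall>\<^sub>F x in at_right a. y < f x"
    unfolding eventually_at_right_field
    using antimono by (intro exI[of _ x0]) (auto intro: less_le_trans)
next
  fix y assume y: "(SUP x\<in>{a<..<b}. f x) < y"
  show "\<forall>\<^sub>F x in at_right a. f x < y"
    unfolding eventually_at_right_field
  proof (intro exI[of _ b] conjI allI impI)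
    fix x assume "a < x" "x < b"
    then have "f x \<le> (SUP x\<in>{a<..<b}. f x)"
      by (intro SUP_upper) auto
    then show "f x < y"
      using y by (rule le_less_trans)
  qed (fact \<open>a < b\<close>)
qed

lemma Lim_at_left_antimono:
  fixes f :: "real \<Rightarrow> 'b::{complete_linorder, linorder_topology}"
  assumes "a < b" and antimono: "\<And>x y. a < x \<Longrightarrow> x \<le> y \<Longrightarrow> y < b \<Longrightarrow> f y \<le> f x"
  shows "Lim (at_left b) f = (INF x\<in>{a<..<b}. f x)"
proof (rule tendsto_Lim[OF trivial_limit_at_left_real], rule order_tendstoI)
  fix y assume "(INF x\<in>{a<..<b}. f x) < y"
  then obtain x0 where "x0 \<in> {a<..<b}" "f x0 < y"
    by (auto simp: INF_less_iff)
  then show "\<forall>\<^sub>F x in at_left b. f x < y"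
    unfolding eventually_at_left_field
    using antimono by (intro exI[of _ x0]) (meson le_less_trans less_imp_le greaterThanLessThan_iff)
next
  fix y assume y: "y < (INF x\<in>{a<..<b}. f x)"
  show "\<forall>\<^sub>F x in at_left b. y < f x"
    unfolding eventually_at_left_field
  proof (intro exI[of _ a] conjI allI impI)
    fix x assume "a < x" "x < b"
    then have "(INF x\<in>{a<..<b}. f x) \<le> f x"
      by (intro INF_lower) auto
    with y show "y < f x"
      by (rule less_le_trans)
  qed (fact \<open>a < b\<close>)
qed

lemma concave_on_slope_ge:
  fixes f :: "real \<Rightarrow> real"
  assumes "concave_on I f" and "x \<in> I" "y \<in> I" and "x < t" "t < y"
  shows "(f y - f x) / (y - x) \<le> (f t - f x) / (t - x)"
    and "(f y - f t) / (y - t) \<le> (f y - f x) / (y - x)"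
proof -
  have cvx: "convex_on I (\<lambda>x. - f x)"
    using assms(1) by (simp add: concave_on_def)
  have "(f y - f x) / (y - x) = - ((- f x - - f y) / (x - y))"
    "(f t - f x) / (t - x) = - ((- f x - - f t) / (x - t))"
    "(f y - f t) / (y - t) = - ((- f t - - f y) / (t - y))"
    by (simp_all add: field_split_simps)
  then show "(f y - f x) / (y - x) \<le> (f t - f x) / (t - x)"
    and "(f y - f t) / (y - t) \<le> (f y - f x) / (y - x)"
    using convex_on_slope_le[OF cvx assms(2-5)] by simp_all
qed

lemma right_deriv_concave_on_eq_SUP:
  assumes "concave_on {a..b} f" and "a \<le> s" "s < b"
  shows "right_deriv f s = (SUP t\<in>{s<..<b}. ereal ((f t - f s) / (t - s)))"
  unfolding right_deriv_def
proof (rule Lim_at_right_antimono)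
  fix x y assume "s < x" "x \<le> y" "y < b"
  then show "ereal ((f y - f s) / (y - s)) \<le> ereal ((f x - f s) / (x - s))"
    using concave_on_slope_ge(1)[OF assms(1), of s y x] assms(2,3)
    by (cases "x = y") auto
qed (fact \<open>s < b\<close>)

lemma slope_le_right_deriv_concave_on:
  assumes "concave_on {a..b} f" and "a \<le> s" "s < t" "t \<le> b"
  shows "ereal ((f t - f s) / (t - s)) \<le> right_deriv f s"
proof -
  define m where "m = (s + t) / 2"
  have m: "s < m" "m < t"
    using assms by (auto simp: m_def)
  have "(f t - f s) / (t - s) \<le> (f m - f s) / (m - s)"
    using concave_on_slope_ge(1)[OF assms(1), of s t m] assms m by auto
  also have "ereal \<dots> \<le> (SUP t\<in>{s<..<b}. ereal ((f t - f s) / (t - s)))"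
    using m assms by (intro SUP_upper) auto
  also have "\<dots> = right_deriv f s"
    using assms by (simp add: right_deriv_concave_on_eq_SUP)
  finally show ?thesis by simp
qed

lemma right_deriv_concave_on_le_slope:
  assumes "concave_on {a..b} f" and "a \<le> x" "x < y" "y < b"
  shows "right_deriv f y \<le> ereal ((f y - f x) / (y - x))"
proof -
  have "ereal ((f t - f y) / (t - y)) \<le> ereal ((f y - f x) / (y - x))" if "t \<in> {y<..<b}" for t
    using concave_on_slope_ge[OF assms(1), of x t y] assms that by auto
  then have "(SUP t\<in>{y<..<b}. ereal ((f t - f y) / (t - y))) \<le> ereal ((f y - f x) / (y - x))"
    by (rule SUP_least)
  then show ?thesis
    using assms by (simp add: right_deriv_concave_on_eq_SUP)
qed

lemma right_deriv_concave_on_antimono: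
  assumes "concave_on {a..b} f" and "a \<le> x" "x \<le> y" "y < b"
  shows "right_deriv f y \<le> right_deriv f x"
proof (cases "x = y")
  case False
  then have "right_deriv f y \<le> ereal ((f y - f x) / (y - x))"
    using assms by (intro right_deriv_concave_on_le_slope) auto
  also have "\<dots> \<le> right_deriv f x"
    using assms False by (intro slope_le_right_deriv_concave_on) auto
  finally show ?thesis .
qed simp

definition concave_majorants :: "(real \<Rightarrow> real) \<Rightarrow> (real \<Rightarrow> real) set" where
  "concave_majorants H = {G. concave_on {0..1} G \<and> (\<forall>x\<in>{0..1}. H x \<le> G x)}"

lemma concave_envelope_eq_INF:
  "concave_envelope H s = (INF G\<in>concave_majorants H. G s)"
  unfolding concave_envelope_def concave_majorants_def
  by (rule arg_cong[where f = Inf]) auto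

lemma concave_on_affine: "convex S \<Longrightarrow> concave_on S (\<lambda>x::real. A + B * x)"
  unfolding concave_on_iff
proof (intro conjI ballI allI impI)
  fix x y u v :: real assume "u + v = 1"
  then have "A = u * A + v * A"
    by (metis distrib_right mult_1)
  then show "u * (A + B * x) + v * (A + B * y) \<le> A + B * (u *\<^sub>R x + v *\<^sub>R y)"
    by (simp add: algebra_simps)
qed

lemma concave_majorants_nonempty:
  assumes "bdd_above (H ` {0..1})"
  shows "concave_majorants H \<noteq> {}"
proof -
  obtain M where "\<forall>x\<in>{0..1}. H x \<le> M"
    using assms by (auto simp: bdd_above_def)
  then have "(\<lambda>_. M) \<in> concave_majorants H"
    using concave_on_affine[of "{0..1}" M 0] by (simp add: concave_majorants_def)
  then show ?thesis by blast
qed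

lemma concave_envelope_ge:
  assumes "bdd_above (H ` {0..1})" and "s \<in> {0..1}"
  shows "H s \<le> concave_envelope H s"
  unfolding concave_envelope_eq_INF
  using assms by (intro cINF_greatest concave_majorants_nonempty) (auto simp: concave_majorants_def)

lemma concave_envelope_le:
  assumes "G \<in> concave_majorants H" and "s \<in> {0..1}"
  shows "concave_envelope H s \<le> G s"
  unfolding concave_envelope_eq_INF
proof (rule cINF_lower[OF _ assms(1)])
  show "bdd_below ((\<lambda>G. G s) ` concave_majorants H)"
    using assms(2) by (auto simp: concave_majorants_def intro!: bdd_belowI2[of _ "H s"])
qed

lemma concave_on_concave_envelope:
  assumes "bdd_above (H ` {0..1})"
  shows "concave_on {0..1} (concave_envelope H)"
  unfolding concave_on_iff
proof (intro conjI ballI allI impI)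
  fix x y u v :: real
  assume xy: "x \<in> {0..1}" "y \<in> {0..1}" and uv: "0 \<le> u" "0 \<le> v" "u + v = 1"
  have "u * concave_envelope H x + v * concave_envelope H y \<le> G (u *\<^sub>R x + v *\<^sub>R y)"
    if G: "G \<in> concave_majorants H" for G
  proof -
    have "u * concave_envelope H x + v * concave_envelope H y \<le> u * G x + v * G y"
      using concave_envelope_le[OF G] xy uv by (intro add_mono mult_left_mono) auto
    also have "\<dots> \<le> G (u *\<^sub>R x + v *\<^sub>R y)"
      using G xy uv by (auto simp: concave_majorants_def concave_on_iff)
    finally show ?thesis .
  qed
  then show "u * concave_envelope H x + v * concave_envelope H y
      \<le> concave_envelope H (u *\<^sub>R x + v *\<^sub>R y)"
    unfolding concave_envelope_eq_INF[of H "u *\<^sub>R x + v *\<^sub>R y"]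
    using concave_majorants_nonempty[OF assms] by (intro cINF_greatest)
qed simp

lemma concave_envelope_touching_affine_majorant:
  assumes "bdd_above (H ` {0..1})" and maj: "\<forall>x\<in>{0..1}. H x \<le> A + B * x"
    and "s \<in> {0..1}" "H s = A + B * s"
  shows "\<forall>x\<in>{0..1}. concave_envelope H x \<le> A + B * x" and "concave_envelope H s = H s"
proof -
  have "(\<lambda>x. A + B * x) \<in> concave_majorants H"
    using maj concave_on_affine[of "{0..1}"] by (simp add: concave_majorants_def)
  then show "\<forall>x\<in>{0..1}. concave_envelope H x \<le> A + B * x"
    using concave_envelope_le by blast
  then show "concave_envelope H s = H s"
    using concave_envelope_ge[OF assms(1,3)] assms(3,4) by force
qed

lemma cone_majorant_from_local_bound:
  fixes f :: "'a::metric_space \<Rightarrow> real"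
  assumes "bdd_above (f ` S)" and "d > 0"
    and local: "\<And>x. x \<in> S \<Longrightarrow> dist x a < d \<Longrightarrow> f x \<le> f a + C * dist x a"
  obtains K where "\<And>x. x \<in> S \<Longrightarrow> f x \<le> f a + K * dist x a"
proof -
  obtain M where M: "\<And>x. x \<in> S \<Longrightarrow> f x \<le> M"
    using assms(1) by (auto simp: bdd_above_def)
  define K where "K = max 0 (max C ((M - f a) / d))"
  have "f x \<le> f a + K * dist x a" if "x \<in> S" for x
  proof (cases "dist x a < d")
    case True
    have "C * dist x a \<le> K * dist x a"
      by (intro mult_right_mono) (auto simp: K_def)
    then show ?thesis
      using local[OF \<open>x \<in> S\<close> True] by linarith
  next
    case False
    have "(M - f a) / d \<le> K"
      by (simp add: K_def)
    then have "M - f a \<le> K * d"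
      using \<open>d > 0\<close> by (simp add: pos_divide_le_eq)
    also have "\<dots> \<le> K * dist x a"
      using False by (intro mult_left_mono) (auto simp: K_def)
    finally show ?thesis
      using M[OF \<open>x \<in> S\<close>] by linarith
  qed
  then show thesis
    by (rule that)
qed

lemma affine_majorant_at_0:
  assumes "bdd_above (H ` {0..1})"
    and "Limsup (at_right 0) (\<lambda>t. ereal ((H t - H 0) / t)) < \<infinity>"
  obtains K where "\<forall>x\<in>{0..1}. H x \<le> H 0 + K * x"
proof -
  obtain C where "Limsup (at_right 0) (\<lambda>t. ereal ((H t - H 0) / t)) < ereal C"
    using ereal_dense2[OF assms(2)] by auto
  then have "\<forall>\<^sub>F t in at_right 0. (H t - H 0) / t < C"
    using Limsup_lessD by fastforce
  then obtain d where "d > 0" and d: "\<And>t. 0 < t \<Longrightarrow> t < d \<Longrightarrow> (H t - H 0) / t < C"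
    unfolding eventually_at_right_field by auto
  have "H x \<le> H 0 + C * dist x 0" if "x \<in> {0..1}" "dist x 0 < d" for x
  proof (cases "x = 0")
    case False
    then show ?thesis
      using d[of x] that by (auto simp: pos_divide_less_eq)
  qed simp
  then obtain K where "\<And>x. x \<in> {0..1} \<Longrightarrow> H x \<le> H 0 + K * dist x 0"
    using cone_majorant_from_local_bound[OF assms(1) \<open>d > 0\<close>] by metis
  then have "\<forall>x\<in>{0..1}. H x \<le> H 0 + K * x"
    by (auto simp: dist_real_def)
  then show thesis
    by (rule that)
qed

lemma affine_majorant_at_1:
  assumes "bdd_above (H ` {0..1})"
    and "Liminf (at_left 1) (\<lambda>t. ereal ((H t - H 1) / (t - 1))) > -\<infinity>"
  obtains K where "\<forall>x\<in>{0..1}. H x \<le> H 1 + K * (1 - x)"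
proof -
  obtain c where "ereal c < Liminf (at_left 1) (\<lambda>t. ereal ((H t - H 1) / (t - 1)))"
    using ereal_dense2[OF assms(2)] by auto
  then have "\<forall>\<^sub>F t in at_left 1. c < (H t - H 1) / (t - 1)"
    using less_LiminfD by fastforce
  then obtain b where "b < 1" and b: "\<And>t. b < t \<Longrightarrow> t < 1 \<Longrightarrow> c < (H t - H 1) / (t - 1)"
    unfolding eventually_at_left_field by auto
  have "H x \<le> H 1 + (- c) * dist x 1" if "x \<in> {0..1}" "dist x 1 < 1 - b" for x
  proof (cases "x = 1")
    case False
    then have "c < (H x - H 1) / (x - 1)"
      using b[of x] that by (auto simp: dist_real_def)
    then show ?thesis
      using False that by (auto simp: dist_real_def neg_less_divide_eq algebra_simps)
  qed simp
  then obtain K where "\<And>x. x \<in> {0..1} \<Longrightarrow> H x \<le> H 1 + K * dist x 1"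
    using cone_majorant_from_local_bound[OF assms(1)] \<open>b < 1\<close> by (metis diff_gt_0_iff_gt)
  then have "\<forall>x\<in>{0..1}. H x \<le> H 1 + K * (1 - x)"
    by (auto simp: dist_real_def)
  then show thesis
    by (rule that)
qed

lemma right_deriv_concave_envelope_0_le:
  assumes "bdd_above (H ` {0..1})" and maj: "\<forall>x\<in>{0..1}. H x \<le> H 0 + K * x"
  shows "right_deriv (concave_envelope H) 0 \<le> ereal K"
proof -
  define E where "E = concave_envelope H"
  have E_le: "\<forall>x\<in>{0..1}. E x \<le> H 0 + K * x" and E0: "E 0 = H 0"
    using concave_envelope_touching_affine_majorant[OF assms(1) maj, of 0] by (simp_all add: E_def)
  have "right_deriv E 0 = (SUP t\<in>{0<..<1}. ereal ((E t - E 0) / (t - 0)))"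
    using concave_on_concave_envelope[OF assms(1)]
    by (simp add: E_def right_deriv_concave_on_eq_SUP)
  also have "\<dots> \<le> ereal K"
  proof (rule SUP_least)
    fix t :: real assume "t \<in> {0<..<1}"
    then have "E t - E 0 \<le> K * t"
      using E_le[rule_format, of t] E0 by simp
    then show "ereal ((E t - E 0) / (t - 0)) \<le> ereal K"
      using \<open>t \<in> {0<..<1}\<close> by (simp add: pos_divide_le_eq)
  qed
  finally show ?thesis
    by (simp add: E_def)
qed

lemma Lim_right_deriv_concave_envelope_at_1_ge:
  assumes "bdd_above (H ` {0..1})" and maj: "\<forall>x\<in>{0..1}. H x \<le> H 1 + K * (1 - x)"
  shows "ereal (- K) \<le> Lim (at_left 1) (\<lambda>s. right_deriv (concave_envelope H) s)"
proof -
  define E where "E = concave_envelope H"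
  have cc: "concave_on {0..1} E"
    using concave_on_concave_envelope[OF assms(1)] by (simp add: E_def)
  have "\<forall>x\<in>{0..1}. H x \<le> (H 1 + K) + (- K) * x"
    using maj by (simp add: algebra_simps)
  then have E_le: "\<forall>x\<in>{0..1}. E x \<le> H 1 + K * (1 - x)" and E1: "E 1 = H 1"
    using concave_envelope_touching_affine_majorant[OF assms(1), of "H 1 + K" "- K" 1]
    by (simp_all add: E_def algebra_simps)
  have "ereal (- K) \<le> right_deriv E s" if "s \<in> {0<..<1}" for s
  proof -
    have "- K \<le> (E 1 - E s) / (1 - s)"
      using E_le E1 that by (auto simp: pos_le_divide_eq algebra_simps)
    also have "ereal \<dots> \<le> right_deriv E s"
      using that by (intro slope_le_right_deriv_concave_on[OF cc]) auto
    finally show ?thesis by simp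
  qed
  then have "ereal (- K) \<le> (INF s\<in>{0<..<1}. right_deriv E s)"
    by (rule INF_greatest)
  also have "\<dots> = Lim (at_left 1) (\<lambda>s. right_deriv E s)"
    using right_deriv_concave_on_antimono[OF cc] by (intro Lim_at_left_antimono[symmetric]) auto
  finally show ?thesis
    by (simp add: E_def)
qed

theorem lemmaA3:
  fixes H :: "real \<Rightarrow> real"
  assumes usc: "usc_on {0..1} H"
  shows "(Liminf (at_left 1) (\<lambda>t. ereal ((H t - H 1) / (t - 1))) > -\<infinity> \<longrightarrow>
            Lim (at_left 1) (\<lambda>s. right_deriv (concave_envelope H) s) > -\<infinity>)
       \<and> (Limsup (at_right 0) (\<lambda>t. ereal ((H t - H 0) / t)) < \<infinity> \<longrightarrow>
            right_deriv (concave_envelope H) 0 < \<infinity>)"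
proof -
  have bdd: "bdd_above (H ` {0..1})"
    using usc_on_compact_bdd_above[OF compact_Icc usc] .
  have "Lim (at_left 1) (\<lambda>s. right_deriv (concave_envelope H) s) > -\<infinity>"
    if liminf: "Liminf (at_left 1) (\<lambda>t. ereal ((H t - H 1) / (t - 1))) > -\<infinity>"
  proof -
    obtain K where "\<forall>x\<in>{0..1}. H x \<le> H 1 + K * (1 - x)"
      using affine_majorant_at_1[OF bdd liminf] .
    then have "ereal (- K) \<le> Lim (at_left 1) (\<lambda>s. right_deriv (concave_envelope H) s)"
      by (rule Lim_right_deriv_concave_envelope_at_1_ge[OF bdd])
    then show ?thesis
      by (rule less_le_trans[rotated]) simp
  qed
  moreover have "right_deriv (concave_envelope H) 0 < \<infinity>"
    if limsup: "Limsup (at_right 0) (\<lambda>t. ereal ((H t - H 0) / t)) < \<infinity>"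
  proof -
    obtain K where "\<forall>x\<in>{0..1}. H x \<le> H 0 + K * x"
      using affine_majorant_at_0[OF bdd limsup] .
    then have "right_deriv (concave_envelope H) 0 \<le> ereal K"
      by (rule right_deriv_concave_envelope_0_le[OF bdd])
    then show ?thesis
      by (rule le_less_trans) simp
  qed
  ultimately show ?thesis
    by blast
qed

end
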